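(* Let $(S,d)$ be a connected metric space. Then $J^S_\bullet\subset\operatorname{ext}(B^S_\bullet)$ for $\bullet=\mathrm{FM}$ and for $\bullet=\mathrm{BL}$.
   Context: $\mathrm{BL}(S)$ is the space of bounded real-valued Lipschitz functions on $S$, $|f|_L=\sup_{x\neq y}|f(x)-f(y)|/d(x,y)$, $\|f\|_{\mathrm{BL}}=\|f\|_\infty+|f|_L$, $\|f\|_{\mathrm{FM}}=\max(\|f\|_\infty,|f|_L)$, $B^S_\bullet=\{f\in\mathrm{BL}(S):\|f\|_\bullet\le1\}$, $\operatorname{ext}$ denotes the set of extreme points. For $f\in\mathrm{BL}(S)$, $M_f=\{x\in S:|f(x)|=\|f\|_\infty\}$. $J^S_{\mathrm{FM}}$ is the set of $f\in B^S_{\mathrm{FM}}$ with $\|f\|_\infty=1$ for which there is a finite non-empty $P_f\subset S$ such that for every $x\in S\setminus M_f$ there exists $p\in P_f$ with $|f(x)-f(p)|=d(x,p)$. $J^S_{\mathrm{BL}}=\{\mathbf{1},-\mathbf{1}\}\cup\hat J^S_{\mathrm{BL}}$, where $\hat J^S_{\mathrm{BL}}$ is the set of $f\in B^S_{\mathrm{BL}}$ with $\|f\|_{\mathrm{BL}}=1$, $f(M_f)=\{\|f\|_\infty,-\|f\|_\infty\}$, and for which there is a finite non-empty $P_f\subset S$ such that for every $x\in S\setminus M_f$ there exists $p\in P_f$ with $|f(x)-f(p)|=(1-\|f\|_\infty)d(x,p)$. *)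

theory Defs
  imports "HOL-Analysis.Analysis"
begin

text \<open>The metric space S is the type 'a (class metric_space), with d = dist.\<close>

definition is_BL :: "('a::metric_space \<Rightarrow> real) \<Rightarrow> bool" where
  "is_BL f \<longleftrightarrow> bounded (range f) \<and> (\<exists>L. \<forall>x y. \<bar>f x - f y\<bar> \<le> L * dist x y)"

definition sup_norm :: "('a \<Rightarrow> real) \<Rightarrow> real" where
  "sup_norm f = (SUP x. \<bar>f x\<bar>)"

text \<open>Lipschitz constant; the 0 accounts for the empty supremum when S is a single point.\<close>
definition lip_const :: "('a::metric_space \<Rightarrow> real) \<Rightarrow> real" where
  "lip_const f = Sup ({\<bar>f x - f y\<bar> / dist x y | x y. x \<noteq> y} \<union> {0})"

definition norm_BL :: "('a::metric_space \<Rightarrow> real) \<Rightarrow> real" where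
  "norm_BL f = sup_norm f + lip_const f"

definition norm_FM :: "('a::metric_space \<Rightarrow> real) \<Rightarrow> real" where
  "norm_FM f = max (sup_norm f) (lip_const f)"

definition ball_BL :: "('a::metric_space \<Rightarrow> real) set" where
  "ball_BL = {f. is_BL f \<and> norm_BL f \<le> 1}"

definition ball_FM :: "('a::metric_space \<Rightarrow> real) set" where
  "ball_FM = {f. is_BL f \<and> norm_FM f \<le> 1}"

definition ext :: "('a \<Rightarrow> real) set \<Rightarrow> ('a \<Rightarrow> real) set" where
  "ext B = {f \<in> B. \<not> (\<exists>g\<in>B. \<exists>h\<in>B. \<exists>t::real. 0 < t \<and> t < 1 \<and> g \<noteq> h \<and>
                         f = (\<lambda>x. t * g x + (1 - t) * h x))}"

definition M_set :: "('a \<Rightarrow> real) \<Rightarrow> 'a set" where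
  "M_set f = {x. \<bar>f x\<bar> = sup_norm f}"

definition J_FM :: "('a::metric_space \<Rightarrow> real) set" where
  "J_FM = {f \<in> ball_FM. sup_norm f = 1 \<and>
      (\<exists>P. finite P \<and> P \<noteq> {} \<and>
         (\<forall>x. x \<notin> M_set f \<longrightarrow> (\<exists>p\<in>P. \<bar>f x - f p\<bar> = dist x p)))}"

definition J_BL_hat :: "('a::metric_space \<Rightarrow> real) set" where
  "J_BL_hat = {f \<in> ball_BL. norm_BL f = 1 \<and>
      f ` M_set f = {sup_norm f, - sup_norm f} \<and>
      (\<exists>P. finite P \<and> P \<noteq> {} \<and>
         (\<forall>x. x \<notin> M_set f \<longrightarrow>
            (\<exists>p\<in>P. \<bar>f x - f p\<bar> = (1 - sup_norm f) * dist x p)))}"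

definition J_BL :: "('a::metric_space \<Rightarrow> real) set" where
  "J_BL = {(\<lambda>_. 1), (\<lambda>_. -1)} \<union> J_BL_hat"

end

theory Submission
  imports Defs
begin

text \<open>
  Let \<open>f = t g + (1 - t) h\<close> with \<open>g, h\<close> in the unit ball and \<open>0 < t < 1\<close>. At a point of
  \<open>M\<^sub>f\<close> the bound \<open>|f| \<le> t |g| + (1 - t) |h|\<close> is attained, and so is the Lipschitz bound at a
  pair \<open>x, p\<close> with \<open>|f x - f p| = L d(x, p)\<close>. Equality in
  \<open>|t u + (1 - t) v| \<le> t A + (1 - t) B\<close> forces \<open>u = \<plusminus>A\<close>, \<open>v = \<plusminus>B\<close> with a common sign, so
  \<open>g - (L\<^sub>g / L) f\<close> takes only finitely many values: two on \<open>M\<^sub>f\<close>, and otherwise its values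
  on the finite set \<open>P\<^sub>f\<close>. Being continuous on a connected space, it is constant, so \<open>g\<close> and \<open>h\<close>
  are affine functions of \<open>f\<close>.

  For FM, \<open>g\<close> and \<open>h\<close> are translates of \<open>f\<close> by constants of opposite signs, which would leave
  the ball where \<open>|f|\<close> is close to \<open>1\<close>. For BL, \<open>f\<close> attains \<open>\<plusminus>s\<close>, so by connectedness some
  value of \<open>f\<close> strictly between them avoids \<open>f(P\<^sub>f)\<close>; this yields a pair on which the
  Lipschitz bound is attained, so the norms of \<open>g\<close> and \<open>h\<close> must split exactly. Then
  \<open>g = \<alpha> f\<close>, \<open>h = \<beta> f\<close> with \<open>\<alpha>, \<beta> \<le> 1\<close> and \<open>t \<alpha> + (1 - t) \<beta> = 1\<close>, whence \<open>g = h = f\<close>.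
\<close>

lemma is_BL_bdd_above_abs: "is_BL u \<Longrightarrow> bdd_above (range (\<lambda>x. \<bar>u x\<bar>))"
  unfolding is_BL_def bounded_iff bdd_above_def by fastforce

lemma abs_le_sup_norm: "is_BL u \<Longrightarrow> \<bar>u x\<bar> \<le> sup_norm u"
  unfolding sup_norm_def by (rule cSUP_upper[OF UNIV_I is_BL_bdd_above_abs])

lemma sup_norm_approx:
  assumes "0 < e"
  shows "\<exists>x. sup_norm u - e < \<bar>u x\<bar>"
proof (rule ccontr)
  assume "\<not> ?thesis"
  then have "sup_norm u \<le> sup_norm u - e"
    unfolding sup_norm_def by (intro cSUP_least) (auto simp: not_less)
  with assms show False by simp
qed

lemma is_BL_bdd_above_difference_quotients:
  assumes "is_BL u"
  shows "bdd_above ({\<bar>u x - u y\<bar> / dist x y | x y. x \<noteq> y} \<union> {0})"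
proof -
  obtain L where L: "\<And>x y. \<bar>u x - u y\<bar> \<le> L * dist x y"
    using assms unfolding is_BL_def by blast
  have "\<bar>u x - u y\<bar> \<le> max L 0 * dist x y" for x y
    using L[of x y] mult_right_mono[of L "max L 0" "dist x y"] by simp
  then have "\<bar>u x - u y\<bar> / dist x y \<le> max L 0" if "x \<noteq> y" for x y
    using that by (simp add: divide_le_eq)
  then show ?thesis unfolding bdd_above_def by (auto intro!: exI[of _ "max L 0"])
qed

lemma lip_const_nonneg: "is_BL u \<Longrightarrow> 0 \<le> lip_const u"
  unfolding lip_const_def by (rule cSup_upper[OF _ is_BL_bdd_above_difference_quotients]) simp_all

lemma abs_diff_le_lip_const:
  assumes "is_BL u"
  shows "\<bar>u x - u y\<bar> \<le> lip_const u * dist x y"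
proof (cases "x = y")
  case False
  have "\<bar>u x - u y\<bar> / dist x y \<le> lip_const u"
    unfolding lip_const_def using is_BL_bdd_above_difference_quotients[OF assms] False
    by (intro cSup_upper) auto
  with False show ?thesis by (simp add: divide_le_eq)
qed simp

lemma lip_const_le:
  assumes "\<And>x y. \<bar>u x - u y\<bar> \<le> L * dist x y" and "0 \<le> L"
  shows "lip_const u \<le> L"
  unfolding lip_const_def
proof (rule cSup_least)
  fix z assume "z \<in> {\<bar>u x - u y\<bar> / dist x y |x y. x \<noteq> y} \<union> {0}"
  with assms show "z \<le> L" by (auto simp: divide_le_eq)
qed simp

lemma is_BL_continuous: "is_BL u \<Longrightarrow> continuous_on UNIV u"
  by (rule lipschitz_on_continuous_on[where L = "lip_const u"], rule lipschitz_onI)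
     (auto simp: dist_real_def abs_diff_le_lip_const lip_const_nonneg)

lemma ball_FM_D:
  assumes "g \<in> ball_FM"
  shows "is_BL g" "\<bar>g x\<bar> \<le> 1" "\<bar>g x - g y\<bar> \<le> 1 * dist x y"
proof -
  show BL: "is_BL g" using assms unfolding ball_FM_def by simp
  have "sup_norm g \<le> 1" "lip_const g \<le> 1"
    using assms unfolding ball_FM_def norm_FM_def by auto
  then show "\<bar>g x\<bar> \<le> 1" "\<bar>g x - g y\<bar> \<le> 1 * dist x y"
    using abs_le_sup_norm[OF BL, of x] abs_diff_le_lip_const[OF BL, of x y]
      mult_right_mono[of "lip_const g" 1 "dist x y"] by auto
qed

lemma ball_BL_D:
  assumes "g \<in> ball_BL"
  shows "is_BL g" "sup_norm g + lip_const g \<le> 1"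
  using assms unfolding ball_BL_def norm_BL_def by auto

lemma extI:
  assumes "f \<in> B"
    and "\<And>g h t. g \<in> B \<Longrightarrow> h \<in> B \<Longrightarrow> 0 < t \<Longrightarrow> t < 1 \<Longrightarrow>
           (\<And>x. f x = t * g x + (1 - t) * h x) \<Longrightarrow> g = h"
  shows "f \<in> ext B"
  using assms unfolding ext_def by fastforce

lemma abs_convex_comb_le:
  fixes u v A B t :: real
  assumes "\<bar>u\<bar> \<le> A" "\<bar>v\<bar> \<le> B" "0 \<le> t" "t \<le> 1"
  shows "\<bar>t * u + (1 - t) * v\<bar> \<le> t * A + (1 - t) * B"
proof -
  have "\<bar>t * u + (1 - t) * v\<bar> \<le> t * \<bar>u\<bar> + (1 - t) * \<bar>v\<bar>"
    using assms(3,4) abs_triangle_ineq[of "t * u" "(1 - t) * v"] by (simp add: abs_mult)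
  also have "\<dots> \<le> t * A + (1 - t) * B"
    using assms by (intro add_mono mult_left_mono) auto
  finally show ?thesis .
qed

lemma abs_convex_comb_eq_bound:
  fixes u v A B t :: real
  assumes "\<bar>u\<bar> \<le> A" "\<bar>v\<bar> \<le> B" "0 < t" "t < 1"
    and "t * A + (1 - t) * B \<le> \<bar>t * u + (1 - t) * v\<bar>"
  shows "(u = A \<and> v = B) \<or> (u = - A \<and> v = - B)"
proof -
  have sign: "(a = \<alpha> \<and> b = \<beta>) \<or> (a = - \<alpha> \<and> b = - \<beta>)"
    if "\<bar>a\<bar> \<le> \<alpha>" "\<bar>b\<bar> \<le> \<beta>" "\<alpha> + \<beta> \<le> \<bar>a + b\<bar>" for a b \<alpha> \<beta> :: real
    using that by linarith
  have "\<bar>t * u\<bar> \<le> t * A" "\<bar>(1 - t) * v\<bar> \<le> (1 - t) * B"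
    using assms by (auto simp: abs_mult intro!: mult_left_mono)
  from sign[OF this assms(5)] assms(3,4) show ?thesis
    by (metis mult_left_cancel mult_minus_right less_irrefl diff_gt_0_iff_gt)
qed

lemma continuous_constant_on_finitely_many_values:
  fixes q :: "'a::topological_space \<Rightarrow> real"
  assumes "connected (UNIV :: 'a set)" "continuous_on UNIV q"
    and "finite P" "finite C" "\<And>x. q x \<in> C \<union> q ` P"
  shows "q constant_on UNIV"
proof (rule continuous_finite_range_constant[OF assms(1,2)])
  have "range q \<subseteq> C \<union> q ` P" using assms(5) by blast
  then show "finite (range q)" using assms(3,4) by (simp add: finite_subset)
qed

lemma connected_value_between_avoiding:
  fixes f :: "'a::topological_space \<Rightarrow> real"
  assumes "connected (UNIV :: 'a set)" "continuous_on UNIV f" "f a < f b" "finite F"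
  shows "\<exists>x. f a < f x \<and> f x < f b \<and> f x \<notin> F"
proof -
  have "\<not> {f a<..<f b} \<subseteq> F"
    using assms(3,4) by (meson finite_subset infinite_Ioo)
  then obtain v where v: "f a < v" "v < f b" "v \<notin> F" by (auto simp: subset_eq)
  have "connected (range f)" by (rule connected_continuous_image[OF assms(2,1)])
  then have "v \<in> range f"
    unfolding connected_iff_interval using v by (meson rangeI less_imp_le)
  with v show ?thesis by auto
qed

lemma convex_decomposition_affine:
  fixes f g h :: "'a::metric_space \<Rightarrow> real"
  assumes conn: "connected (UNIV :: 'a set)"
    and t: "0 < t" "t < 1"
    and f: "\<And>x. f x = t * g x + (1 - t) * h x"
    and g_bound: "\<And>x. \<bar>g x\<bar> \<le> A" and h_bound: "\<And>x. \<bar>h x\<bar> \<le> B"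
    and g_lip: "\<And>x y. \<bar>g x - g y\<bar> \<le> Lg * dist x y"
    and h_lip: "\<And>x y. \<bar>h x - h y\<bar> \<le> Lh * dist x y"
    and s: "t * A + (1 - t) * B = s"
    and L: "t * Lg + (1 - t) * Lh = L" "L \<noteq> 0"
    and cont: "continuous_on UNIV g" "continuous_on UNIV h"
    and "finite P" and tight: "\<And>x. \<bar>f x\<bar> \<noteq> s \<Longrightarrow> \<exists>p\<in>P. \<bar>f x - f p\<bar> = L * dist x p"
  shows "\<exists>c. \<forall>x. g x = Lg / L * f x + c"
proof -
  define q where "q x = g x - Lg / L * f x" for x
  define c where "c = A - Lg / L * s"
  have q_max: "q x \<in> {c, - c}" if "\<bar>f x\<bar> = s" for x
  proof -
    have "t * A + (1 - t) * B \<le> \<bar>t * g x + (1 - t) * h x\<bar>"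
      using that f[of x] s by simp
    from abs_convex_comb_eq_bound[OF g_bound h_bound t this]
    have "(g x = A \<and> f x = s) \<or> (g x = - A \<and> f x = - s)"
      using f[of x] s by auto
    then show ?thesis unfolding q_def c_def by auto
  qed
  have q_tight: "q x = q p" if "\<bar>f x - f p\<bar> = L * dist x p" for x p
  proof -
    have f_diff: "f x - f p = t * (g x - g p) + (1 - t) * (h x - h p)"
      using f[of x] f[of p] by (simp add: algebra_simps)
    have Ld: "t * (Lg * dist x p) + (1 - t) * (Lh * dist x p) = L * dist x p"
      by (simp add: algebra_simps flip: L(1))
    then have "t * (Lg * dist x p) + (1 - t) * (Lh * dist x p)
                 \<le> \<bar>t * (g x - g p) + (1 - t) * (h x - h p)\<bar>"
      using that f_diff by simp
    from abs_convex_comb_eq_bound[OF g_lip h_lip t this]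
    have "(g x - g p = Lg * dist x p \<and> f x - f p = L * dist x p) \<or>
          (g x - g p = - (Lg * dist x p) \<and> f x - f p = - (L * dist x p))"
      using f_diff Ld by auto
    then have "L * (g x - g p) = Lg * (f x - f p)" by (elim disjE conjE) (simp_all add: ac_simps)
    then show ?thesis unfolding q_def using L(2) by (simp add: field_simps)
  qed
  have "q constant_on UNIV"
  proof (rule continuous_constant_on_finitely_many_values[OF conn _ \<open>finite P\<close>])
    show "continuous_on UNIV q"
      unfolding q_def f using cont by (intro continuous_intros)
    show "q x \<in> {c, - c} \<union> q ` P" for x
    proof (cases "\<bar>f x\<bar> = s")
      case False
      with tight obtain p where "p \<in> P" "\<bar>f x - f p\<bar> = L * dist x p" by blast
      with q_tight show ?thesis by auto
    qed (use q_max in auto)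
  qed simp
  then obtain c' where "q x = c'" for x
    unfolding constant_on_def by blast
  then have "g x = Lg / L * f x + c'" for x
    unfolding q_def by (simp add: algebra_simps)
  then show ?thesis by blast
qed

lemma sup_norm_one_no_opposite_shifts:
  assumes "sup_norm u = 1" "d' < 0" "0 < d"
    and "\<And>x. \<bar>u x + d\<bar> \<le> 1" "\<And>x. \<bar>u x + d'\<bar> \<le> 1"
  shows False
proof -
  obtain x where x: "1 - min d (- d') < \<bar>u x\<bar>"
    using sup_norm_approx[of "min d (- d')" u] assms(1-3) by auto
  have "min d (- d') \<le> d" "min d (- d') \<le> - d'" by simp_all
  with x assms(4,5)[of x] show False by linarith
qed

lemma convex_comb_zero_opposite_signs:
  fixes t c c' :: real
  assumes "0 < t" "t < 1" "t * c + (1 - t) * c' = 0"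
  shows "0 < c \<Longrightarrow> c' < 0" and "c < 0 \<Longrightarrow> 0 < c'"
proof -
  have "0 < c \<longleftrightarrow> 0 < t * c" "c < 0 \<longleftrightarrow> t * c < 0"
    and "0 < c' \<longleftrightarrow> 0 < (1 - t) * c'" "c' < 0 \<longleftrightarrow> (1 - t) * c' < 0"
    using assms(1,2) by (simp_all add: zero_less_mult_iff mult_less_0_iff)
  with assms(3) show "0 < c \<Longrightarrow> c' < 0" and "c < 0 \<Longrightarrow> 0 < c'" by linarith+
qed

lemma J_FM_subset_ext:
  assumes conn: "connected (UNIV :: 'a::metric_space set)"
  shows "(J_FM :: ('a \<Rightarrow> real) set) \<subseteq> ext ball_FM"
proof
  fix f :: "'a \<Rightarrow> real"
  assume "f \<in> J_FM"
  then obtain P where f_ball: "f \<in> ball_FM" and f_sup: "sup_norm f = 1" and "finite P"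
    and off_M: "\<And>x. \<bar>f x\<bar> \<noteq> sup_norm f \<Longrightarrow> \<exists>p\<in>P. \<bar>f x - f p\<bar> = dist x p"
    unfolding J_FM_def M_set_def by blast
  have tight: "\<exists>p\<in>P. \<bar>f x - f p\<bar> = 1 * dist x p" if "\<bar>f x\<bar> \<noteq> 1" for x
    using off_M that f_sup by simp
  show "f \<in> ext ball_FM"
  proof (rule extI[OF f_ball])
    fix g h t
    assume g: "g \<in> ball_FM" and h: "h \<in> ball_FM" and t: "0 < t" "t < 1"
      and f: "\<And>x. f x = t * g x + (1 - t) * h x"
    have f': "f x = (1 - t) * h x + (1 - (1 - t)) * g x" for x
      using f[of x] by simp
    have t': "0 < 1 - t" "1 - t < 1" using t by simp_all
    note g_facts = ball_FM_D[OF g] is_BL_continuous[OF ball_FM_D(1)[OF g]]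
    note h_facts = ball_FM_D[OF h] is_BL_continuous[OF ball_FM_D(1)[OF h]]
    obtain cg where cg: "\<And>x. g x = f x + cg"
      using convex_decomposition_affine[OF conn t f g_facts(2) h_facts(2) g_facts(3) h_facts(3)
          _ _ _ g_facts(4) h_facts(4) \<open>finite P\<close> tight] by auto
    obtain ch where ch: "\<And>x. h x = f x + ch"
      using convex_decomposition_affine[OF conn t' f' h_facts(2) g_facts(2) h_facts(3) g_facts(3)
          _ _ _ h_facts(4) g_facts(4) \<open>finite P\<close> tight] by auto
    have comb: "t * cg + (1 - t) * ch = 0"
      using f[of undefined] cg[of undefined] ch[of undefined] by (simp add: algebra_simps)
    have bounds: "\<bar>f x + cg\<bar> \<le> 1" "\<bar>f x + ch\<bar> \<le> 1" for x
      using g_facts(2)[of x] h_facts(2)[of x] by (simp_all add: cg ch)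
    have "cg = 0"
    proof (rule linorder_cases[of cg 0])
      assume "cg < 0"
      then have "0 < ch" using convex_comb_zero_opposite_signs[OF t comb] by simp
      with \<open>cg < 0\<close> show ?thesis using sup_norm_one_no_opposite_shifts[OF f_sup _ _ bounds(2,1)] by blast
    next
      assume "0 < cg"
      then have "ch < 0" using convex_comb_zero_opposite_signs[OF t comb] by simp
      with \<open>0 < cg\<close> show ?thesis using sup_norm_one_no_opposite_shifts[OF f_sup _ _ bounds] by blast
    qed
    moreover from this comb t have "ch = 0" by simp
    ultimately show "g = h" using cg ch by auto
  qed
qed

lemma ball_BL_abs_le_one:
  assumes "g \<in> ball_BL"
  shows "\<bar>g x\<bar> \<le> 1"
  using abs_le_sup_norm[of g x] lip_const_nonneg[of g] ball_BL_D[OF assms] by linarith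

lemma const_in_ext_ball_BL:
  assumes "\<bar>c\<bar> = 1"
  shows "(\<lambda>_::'a::metric_space. c) \<in> ext ball_BL"
proof (rule extI)
  have "is_BL (\<lambda>_::'a. c)" unfolding is_BL_def by (auto intro: exI[of _ 0])
  moreover have "sup_norm (\<lambda>_::'a. c) = 1" using assms by (simp add: sup_norm_def)
  moreover have "lip_const (\<lambda>_::'a. c) \<le> 0" by (rule lip_const_le) simp_all
  ultimately show "(\<lambda>_::'a. c) \<in> ball_BL" unfolding ball_BL_def norm_BL_def by simp
next
  fix g h :: "'a \<Rightarrow> real" and t :: real
  assume g: "g \<in> ball_BL" and h: "h \<in> ball_BL" and t: "0 < t" "t < 1"
    and c: "\<And>x. c = t * g x + (1 - t) * h x"
  have "g x = h x" for x
    using abs_convex_comb_eq_bound[OF ball_BL_abs_le_one[OF g, of x] ball_BL_abs_le_one[OF h, of x] t]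
      c[of x] assms by auto
  then show "g = h" by auto
qed

lemma J_BL_hat_D:
  assumes "f \<in> J_BL_hat"
  obtains a b P where "f \<in> ball_BL"
    "0 < sup_norm f" "sup_norm f < 1" "f a = sup_norm f" "f b = - sup_norm f" "finite P"
    "\<And>x. \<bar>f x\<bar> \<noteq> sup_norm f \<Longrightarrow> \<exists>p\<in>P. \<bar>f x - f p\<bar> = (1 - sup_norm f) * dist x p"
proof -
  define s where "s = sup_norm f"
  obtain P where f_ball: "f \<in> ball_BL" and norm: "s + lip_const f = 1" and "finite P"
    and tight: "\<And>x. \<bar>f x\<bar> \<noteq> s \<Longrightarrow> \<exists>p\<in>P. \<bar>f x - f p\<bar> = (1 - s) * dist x p"
    using assms unfolding J_BL_hat_def M_set_def norm_BL_def s_def by blast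
  have "f ` M_set f = {s, - s}" using assms unfolding J_BL_hat_def s_def by blast
  then obtain a b where a: "f a = s" and b: "f b = - s" by (metis imageE insertI1 insert_commute)
  have f_BL: "is_BL f" using ball_BL_D(1)[OF f_ball] .
  have "0 < s"
  proof (rule ccontr)
    assume "\<not> 0 < s"
    then have "f x = 0" for x using abs_le_sup_norm[OF f_BL, of x] unfolding s_def by auto
    then have "lip_const f \<le> 0" by (intro lip_const_le) auto
    with norm \<open>\<not> 0 < s\<close> show False by simp
  qed
  have "0 < lip_const f"
  proof (rule ccontr)
    assume "\<not> 0 < lip_const f"
    then have "\<bar>f a - f b\<bar> \<le> 0"
      using abs_diff_le_lip_const[OF f_BL, of a b] mult_nonpos_nonneg[of "lip_const f" "dist a b"]
      by simp
    with a b \<open>0 < s\<close> show False by simp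
  qed
  with norm have "s < 1" by simp
  with that f_ball \<open>0 < s\<close> a b \<open>finite P\<close> tight show ?thesis unfolding s_def by blast
qed

lemma J_BL_hat_tight_pair:
  assumes conn: "connected (UNIV :: 'a::metric_space set)" and "(f :: 'a \<Rightarrow> real) \<in> J_BL_hat"
  obtains x p where "x \<noteq> p" "\<bar>f x - f p\<bar> = (1 - sup_norm f) * dist x p"
proof -
  obtain a b P where f_ball: "f \<in> ball_BL" and s: "0 < sup_norm f" and a: "f a = sup_norm f"
    and b: "f b = - sup_norm f" and "finite P"
    and tight: "\<And>x. \<bar>f x\<bar> \<noteq> sup_norm f \<Longrightarrow> \<exists>p\<in>P. \<bar>f x - f p\<bar> = (1 - sup_norm f) * dist x p"
    using J_BL_hat_D[OF assms(2)] by metis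
  obtain x where x: "f b < f x" "f x < f a" "f x \<notin> f ` P"
    using connected_value_between_avoiding[OF conn is_BL_continuous[OF ball_BL_D(1)[OF f_ball]],
        of b a "f ` P"] a b s \<open>finite P\<close> by auto
  then obtain p where "p \<in> P" "\<bar>f x - f p\<bar> = (1 - sup_norm f) * dist x p"
    using tight a b by force
  moreover from x(3) \<open>p \<in> P\<close> have "x \<noteq> p" by auto
  ultimately show ?thesis using that by blast
qed

lemma ball_BL_decomposition_norms:
  assumes g: "g \<in> ball_BL" and h: "h \<in> ball_BL" and t: "0 < t" "t < 1"
    and f: "\<And>x. f x = t * g x + (1 - t) * h x"
    and "f a = s" and "x \<noteq> p" "\<bar>f x - f p\<bar> = (1 - s) * dist x p"
  shows "t * sup_norm g + (1 - t) * sup_norm h = s"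
    and "t * lip_const g + (1 - t) * lip_const h = 1 - s"
proof -
  note g_BL = ball_BL_D(1)[OF g] and h_BL = ball_BL_D(1)[OF h]
  have "s \<le> t * sup_norm g + (1 - t) * sup_norm h"
    using abs_convex_comb_le[OF abs_le_sup_norm[OF g_BL] abs_le_sup_norm[OF h_BL], of t a a]
      t f[of a] \<open>f a = s\<close> by simp
  moreover have "1 - s \<le> t * lip_const g + (1 - t) * lip_const h"
  proof -
    have "f x - f p = t * (g x - g p) + (1 - t) * (h x - h p)"
      using f[of x] f[of p] by (simp add: algebra_simps)
    then have "(1 - s) * dist x p \<le> t * (lip_const g * dist x p) + (1 - t) * (lip_const h * dist x p)"
      using abs_convex_comb_le[OF abs_diff_le_lip_const[OF g_BL] abs_diff_le_lip_const[OF h_BL],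
          of t x p x p] t assms(8) by simp
    then have "(1 - s) * dist x p \<le> (t * lip_const g + (1 - t) * lip_const h) * dist x p"
      by (simp add: algebra_simps)
    with \<open>x \<noteq> p\<close> show ?thesis by simp
  qed
  moreover have "t * (sup_norm g + lip_const g) + (1 - t) * (sup_norm h + lip_const h) \<le> 1"
    using ball_BL_D(2)[OF g] ball_BL_D(2)[OF h] t by (intro convex_bound_le) simp_all
  ultimately show "t * sup_norm g + (1 - t) * sup_norm h = s"
    and "t * lip_const g + (1 - t) * lip_const h = 1 - s"
    by (simp_all add: algebra_simps)
qed

lemma J_BL_hat_decomposition_component:
  assumes conn: "connected (UNIV :: 'a::metric_space set)" and J: "(f :: 'a \<Rightarrow> real) \<in> J_BL_hat"
    and g: "g \<in> ball_BL" and h: "h \<in> ball_BL" and t: "0 < t" "t < 1"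
    and f: "\<And>x. f x = t * g x + (1 - t) * h x"
  shows "\<exists>\<alpha>. 0 \<le> \<alpha> \<and> \<alpha> \<le> 1 \<and> g = (\<lambda>x. \<alpha> * f x)"
proof -
  define s where "s = sup_norm f"
  obtain a b P where s: "0 < s" "s < 1" and a: "f a = s" and b: "f b = - s" and "finite P"
    and tight: "\<And>x. \<bar>f x\<bar> \<noteq> s \<Longrightarrow> \<exists>p\<in>P. \<bar>f x - f p\<bar> = (1 - s) * dist x p"
    using J_BL_hat_D[OF J] unfolding s_def by metis
  obtain x0 p0 where x0_p0: "x0 \<noteq> p0" "\<bar>f x0 - f p0\<bar> = (1 - s) * dist x0 p0"
    using J_BL_hat_tight_pair[OF conn J] unfolding s_def by metis
  define sg sh Lg Lh
    where "sg = sup_norm g" and "sh = sup_norm h" and "Lg = lip_const g" and "Lh = lip_const h"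
  note g_BL = ball_BL_D(1)[OF g] and h_BL = ball_BL_D(1)[OF h]
  note bounds = abs_le_sup_norm[OF g_BL, folded sg_def] abs_le_sup_norm[OF h_BL, folded sh_def]
    abs_diff_le_lip_const[OF g_BL, folded Lg_def] abs_diff_le_lip_const[OF h_BL, folded Lh_def]
  note norms_eq = ball_BL_decomposition_norms[OF g h t f a x0_p0, folded sg_def sh_def Lg_def Lh_def]
  have extreme: "(g x = sg \<and> f x = s) \<or> (g x = - sg \<and> f x = - s)" if "\<bar>f x\<bar> = s" for x
  proof -
    have "t * sg + (1 - t) * sh \<le> \<bar>t * g x + (1 - t) * h x\<bar>"
      using that f[of x] norms_eq(1) by simp
    from abs_convex_comb_eq_bound[OF bounds(1,2) t this] show ?thesis
      using f[of x] norms_eq(1) by (elim disjE) simp_all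
  qed
  define \<alpha> where "\<alpha> = Lg / (1 - s)"
  obtain c where c: "\<And>x. g x = \<alpha> * f x + c"
    using convex_decomposition_affine[OF conn t f bounds norms_eq _
        is_BL_continuous[OF g_BL] is_BL_continuous[OF h_BL] \<open>finite P\<close> tight] s
    unfolding \<alpha>_def by auto
  have "\<alpha> * s + c = sg" "\<alpha> * - s + c = - sg"
    using extreme[of a] extreme[of b] a b s c[of a] c[of b] by auto
  then have "c = 0" "sg = \<alpha> * s" by simp_all
  moreover have "\<alpha> * s + Lg = \<alpha>" unfolding \<alpha>_def using s by (simp add: field_simps)
  moreover have "sg + Lg \<le> 1" "0 \<le> Lg"
    using ball_BL_D(2)[OF g] lip_const_nonneg[OF g_BL] unfolding sg_def Lg_def by simp_all
  ultimately show ?thesis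
    using c s unfolding \<alpha>_def by (intro exI[of _ \<alpha>]) (auto simp: \<alpha>_def)
qed

lemma J_BL_hat_subset_ext:
  assumes conn: "connected (UNIV :: 'a::metric_space set)"
  shows "(J_BL_hat :: ('a \<Rightarrow> real) set) \<subseteq> ext ball_BL"
proof
  fix f :: "'a \<Rightarrow> real"
  assume J: "f \<in> J_BL_hat"
  obtain a where f_ball: "f \<in> ball_BL" and "0 < sup_norm f" "f a = sup_norm f"
    using J_BL_hat_D[OF J] by metis
  then have "f a \<noteq> 0" by simp
  show "f \<in> ext ball_BL"
  proof (rule extI[OF f_ball])
    fix g h t
    assume g: "g \<in> ball_BL" and h: "h \<in> ball_BL" and t: "0 < t" "t < 1"
      and f: "\<And>x. f x = t * g x + (1 - t) * h x"
    have f': "f x = (1 - t) * h x + (1 - (1 - t)) * g x" for x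
      using f[of x] by simp
    have t': "0 < 1 - t" "1 - t < 1" using t by simp_all
    obtain \<alpha> \<beta> where \<alpha>: "0 \<le> \<alpha>" "\<alpha> \<le> 1" "g = (\<lambda>x. \<alpha> * f x)"
      and \<beta>: "0 \<le> \<beta>" "\<beta> \<le> 1" "h = (\<lambda>x. \<beta> * f x)"
      using J_BL_hat_decomposition_component[OF conn J g h t f]
        J_BL_hat_decomposition_component[OF conn J h g t' f'] by metis
    have "f a * 1 = f a * (t * \<alpha> + (1 - t) * \<beta>)"
      using f[of a] \<alpha>(3) \<beta>(3) by (simp add: algebra_simps)
    then have "t * \<alpha> + (1 - t) * \<beta> = 1"
      using \<open>f a \<noteq> 0\<close> by (metis mult_left_cancel)
    then have "t * 1 + (1 - t) * 1 \<le> \<bar>t * \<alpha> + (1 - t) * \<beta>\<bar>" by simp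
    from abs_convex_comb_eq_bound[OF _ _ t this] have "\<alpha> = 1" "\<beta> = 1"
      using \<alpha>(1,2) \<beta>(1,2) by auto
    with \<alpha>(3) \<beta>(3) show "g = h" by simp
  qed
qed

theorem proposition5p3:
  assumes "connected (UNIV :: 'a::metric_space set)"
  shows "(J_FM :: ('a \<Rightarrow> real) set) \<subseteq> ext ball_FM \<and>
         (J_BL :: ('a \<Rightarrow> real) set) \<subseteq> ext ball_BL"
  using J_FM_subset_ext[OF assms] J_BL_hat_subset_ext[OF assms]
    const_in_ext_ball_BL[of 1] const_in_ext_ball_BL[of "- 1"]
  unfolding J_BL_def by auto

end
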